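(* Let $G$ be a countable infinite group and $A$ a finite set. The Bernoulli shift $A^G$ is disjoint from every minimal, proximal $G$-flow. In particular, every minimal proximal $G$-flow has the separated covering property.
   Context: $A^G$ carries the product topology and the action $(g\cdot z)(h)=z(hg)$. A $G$-flow is proximal if for all $y_1,y_2$ there exist $z$ and a net $(g_i)$ in $G$ with $g_iy_1\to z$, $g_iy_2\to z$; minimal if every orbit is dense. Two $G$-flows are disjoint if the only closed invariant subset of their product projecting onto both factors is the whole product. For finite $D\subseteq G$, $S\subseteq G$ is $D$-separated if $Dg\cap Dh=\emptyset$ for distinct $g,h\in S$; a minimal flow $X$ has the separated covering property if for every finite $D\subseteq G$ and non-empty open $U\subseteq X$ there is a $D$-separated $S$ with $S^{-1}U=X$. *)

theory Defs
  imports "HOL-Analysis.Analysis"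
begin

text \<open>Groups are rendered with the type class group_add (not assumed commutative);
  the group operation is written +, the identity 0, inverses -g.
  G carries the discrete topology, so continuity of the action amounts to
  continuity of each map act g.\<close>

definition G_flow :: "'x topology \<Rightarrow> ('g::group_add \<Rightarrow> 'x \<Rightarrow> 'x) \<Rightarrow> bool" where
  "G_flow X act \<longleftrightarrow>
     compact_space X \<and> Hausdorff_space X \<and>
     (\<forall>g. continuous_map X X (act g)) \<and>
     (\<forall>x\<in>topspace X. act 0 x = x) \<and>
     (\<forall>g h. \<forall>x\<in>topspace X. act (g + h) x = act g (act h x))"

definition minimal_flow :: "'x topology \<Rightarrow> ('g::group_add \<Rightarrow> 'x \<Rightarrow> 'x) \<Rightarrow> bool" where
  "minimal_flow X act \<longleftrightarrow>
     (\<forall>x\<in>topspace X. X closure_of (range (\<lambda>g. act g x)) = topspace X)"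

text \<open>Nets in G are rendered as (proper) filters on G.\<close>
definition proximal_flow :: "'x topology \<Rightarrow> ('g::group_add \<Rightarrow> 'x \<Rightarrow> 'x) \<Rightarrow> bool" where
  "proximal_flow X act \<longleftrightarrow>
     (\<forall>y1\<in>topspace X. \<forall>y2\<in>topspace X. \<exists>z\<in>topspace X. \<exists>F :: 'g filter.
        F \<noteq> bot \<and> limitin X (\<lambda>g. act g y1) z F \<and> limitin X (\<lambda>g. act g y2) z F)"

definition disjoint_flows ::
  "'x topology \<Rightarrow> ('g::group_add \<Rightarrow> 'x \<Rightarrow> 'x) \<Rightarrow> 'y topology \<Rightarrow> ('g \<Rightarrow> 'y \<Rightarrow> 'y) \<Rightarrow> bool" where
  "disjoint_flows X actX Y actY \<longleftrightarrow>
     (\<forall>Z. closedin (prod_topology X Y) Z \<and>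
          (\<forall>g. \<forall>(x,y)\<in>Z. (actX g x, actY g y) \<in> Z) \<and>
          fst ` Z = topspace X \<and> snd ` Z = topspace Y
        \<longrightarrow> Z = topspace X \<times> topspace Y)"

definition bernoulli_space :: "'a set \<Rightarrow> ('g \<Rightarrow> 'a) topology" where
  "bernoulli_space A = product_topology (\<lambda>_. discrete_topology A) UNIV"

definition bernoulli_shift :: "'g::group_add \<Rightarrow> ('g \<Rightarrow> 'a) \<Rightarrow> ('g \<Rightarrow> 'a)" where
  "bernoulli_shift g z = (\<lambda>h. z (h + g))"

definition separated :: "'g::group_add set \<Rightarrow> 'g set \<Rightarrow> bool" where
  "separated D S \<longleftrightarrow>
     (\<forall>g\<in>S. \<forall>h\<in>S. g \<noteq> h \<longrightarrow> (\<lambda>d. d + g) ` D \<inter> (\<lambda>d. d + h) ` D = {})"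

definition separated_covering :: "'x topology \<Rightarrow> ('g::group_add \<Rightarrow> 'x \<Rightarrow> 'x) \<Rightarrow> bool" where
  "separated_covering X act \<longleftrightarrow>
     (\<forall>D U. finite D \<and> openin X U \<and> U \<noteq> {} \<longrightarrow>
        (\<exists>S. separated D S \<and> (\<Union>s\<in>S. act (- s) ` U) = topspace X))"

end

theory Submission
  imports Defs
begin

text \<open>Join g and h in G when D + g and D + h meet; every vertex of this graph has at most
  |D|^2 neighbours, so a greedy colouring along an enumeration of G splits G into finitely many
  D-separated colour classes. In a minimal proximal flow any finite set of points can be moved
  into a given non-empty open set U by a single group element: proximality gathers the points
  near one point, minimality carries that point into U. Applying this to one witness per colour
  class shows that the translates of U by some colour class cover X, i.e. the separated covering
  property. Disjointness from A^G then only uses this property: given a cylinder around x0 with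
  finite support D and an open V in Y, take a D-separated S whose translates of V cover Y and a
  configuration x whose restriction to each D + s (s in S) is a translated copy of x0 on D;
  a point (x, y) of a joining Z is moved by some s into the box around (x0, y0), so the closed
  set Z is dense in the product.\<close>

lemma Least_not_in_le_card:
  fixes F :: "nat set"
  assumes "finite F"
  shows "(LEAST c. c \<notin> F) \<le> card F"
proof -
  have "\<not> {0..card F} \<subseteq> F"
  proof
    assume "{0..card F} \<subseteq> F"
    from card_mono[OF assms this] show False by simp
  qed
  then obtain c where "c \<le> card F" "c \<notin> F" by (auto simp: subset_eq)
  then show ?thesis using Least_le[of "\<lambda>c. c \<notin> F" c] by linarith
qed

definition greedy_colouring :: "(nat \<Rightarrow> nat \<Rightarrow> bool) \<Rightarrow> nat \<Rightarrow> nat" where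
  "greedy_colouring R = wfrec less_than (\<lambda>f n. LEAST k. k \<notin> {f m | m. m < n \<and> R m n})"

lemma greedy_colouring_eq:
  "greedy_colouring R n = (LEAST k. k \<notin> {greedy_colouring R m | m. m < n \<and> R m n})"
  by (subst def_wfrec[OF greedy_colouring_def[THEN eq_reflection] wf_less_than]) (auto simp: cut_apply)

lemma greedy_colouring_le:
  assumes "finite {m. R m n}"
  shows "greedy_colouring R n \<le> card {m. R m n}"
proof -
  let ?F = "{greedy_colouring R m | m. m < n \<and> R m n}"
  have "?F \<subseteq> greedy_colouring R ` {m. R m n}" by blast
  then have "finite ?F" and "card ?F \<le> card (greedy_colouring R ` {m. R m n})"
    using assms by (auto intro: finite_subset card_mono)
  moreover have "card (greedy_colouring R ` {m. R m n}) \<le> card {m. R m n}"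
    by (rule card_image_le[OF assms])
  ultimately show ?thesis
    using Least_not_in_le_card[of ?F] greedy_colouring_eq[of R n] by linarith
qed

lemma greedy_colouring_neq:
  assumes "m < n" "R m n"
  shows "greedy_colouring R m \<noteq> greedy_colouring R n"
proof -
  let ?F = "{greedy_colouring R m | m. m < n \<and> R m n}"
  have "finite ?F"
    by (rule finite_subset[of _ "greedy_colouring R ` {..<n}"]) auto
  then have "\<exists>k. k \<notin> ?F" by (meson ex_new_if_finite infinite_UNIV_nat)
  then have "greedy_colouring R n \<notin> ?F"
    unfolding greedy_colouring_eq[of R n] by (rule LeastI_ex)
  then show ?thesis using assms by auto
qed

lemma countable_bounded_degree_colouring:
  fixes R :: "'v \<Rightarrow> 'v \<Rightarrow> bool"
  assumes "countable (UNIV :: 'v set)"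
    and sym: "\<And>u v. R u v \<Longrightarrow> R v u"
    and deg: "\<And>v. finite {u. R u v} \<and> card {u. R u v} \<le> k"
  shows "\<exists>col :: 'v \<Rightarrow> nat. (\<forall>v. col v \<le> k) \<and> (\<forall>u v. u \<noteq> v \<and> R u v \<longrightarrow> col u \<noteq> col v)"
proof -
  obtain \<iota> :: "'v \<Rightarrow> nat" where "inj \<iota>" using countableE[OF assms(1)] by blast
  define R' where "R' m n \<longleftrightarrow> (\<exists>u v. \<iota> u = m \<and> \<iota> v = n \<and> R u v)" for m n
  have R'_nbhd: "{m. R' m (\<iota> v)} = \<iota> ` {u. R u v}" for v
    using \<open>inj \<iota>\<close> unfolding R'_def by (auto dest: injD)
  have "finite {m. R' m n} \<and> card {m. R' m n} \<le> k" for n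
  proof (cases "n \<in> range \<iota>")
    case True
    then obtain v where "n = \<iota> v" by blast
    then show ?thesis
      using deg[of v] R'_nbhd[of v] card_image_le[of "{u. R u v}" \<iota>] by auto
  next
    case False
    then have "{m. R' m n} = {}" unfolding R'_def by blast
    then show ?thesis by simp
  qed
  then have bound: "greedy_colouring R' n \<le> k" for n
    using greedy_colouring_le order.trans by blast
  have "greedy_colouring R' (\<iota> u) \<noteq> greedy_colouring R' (\<iota> v)" if "u \<noteq> v" "R u v" for u v
  proof -
    have "\<iota> u \<noteq> \<iota> v" using \<open>inj \<iota>\<close> that(1) by (auto dest: injD)
    moreover have "R' (\<iota> u) (\<iota> v)" "R' (\<iota> v) (\<iota> u)" using that(2) sym unfolding R'_def by blast+
    ultimately show ?thesis using greedy_colouring_neq by (metis linorder_neqE_nat)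
  qed
  with bound show ?thesis by (intro exI[of _ "\<lambda>v. greedy_colouring R' (\<iota> v)"]) blast
qed

lemma separated_colouring:
  fixes D :: "'g::group_add set"
  assumes "countable (UNIV :: 'g set)" "finite D"
  shows "\<exists>(col :: 'g \<Rightarrow> nat) N. (\<forall>g. col g < N) \<and> (\<forall>k. separated D {g. col g = k})"
proof -
  define R where "R g h \<longleftrightarrow> (\<lambda>d. d + g) ` D \<inter> (\<lambda>d. d + h) ` D \<noteq> {}" for g h :: 'g
  have "{g. R g h} \<subseteq> (\<lambda>(d1, d2). - d1 + d2 + h) ` (D \<times> D)" for h
  proof
    fix g assume "g \<in> {g. R g h}"
    then obtain d1 d2 where "d1 \<in> D" "d2 \<in> D" "d1 + g = d2 + h" unfolding R_def by auto
    then have "g = - d1 + d2 + h" by (metis add.assoc minus_add_cancel)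
    with \<open>d1 \<in> D\<close> \<open>d2 \<in> D\<close> show "g \<in> (\<lambda>(d1, d2). - d1 + d2 + h) ` (D \<times> D)" by force
  qed
  moreover have "finite ((\<lambda>(d1, d2). - d1 + d2 + h) ` (D \<times> D))"
    and "card ((\<lambda>(d1, d2). - d1 + d2 + h) ` (D \<times> D)) \<le> card D * card D" for h :: 'g
    using assms(2) card_image_le[of "D \<times> D"] by (auto simp: card_cartesian_product)
  ultimately have deg: "finite {g. R g h} \<and> card {g. R g h} \<le> card D * card D" for h
    by (meson card_mono finite_subset order.trans)
  have sym: "R g h \<Longrightarrow> R h g" for g h unfolding R_def by blast
  obtain col :: "'g \<Rightarrow> nat" where col:
    "\<forall>g. col g \<le> card D * card D" "\<forall>g h. g \<noteq> h \<and> R g h \<longrightarrow> col g \<noteq> col h"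
    using countable_bounded_degree_colouring[of R "card D * card D", OF assms(1) sym deg] by blast
  show ?thesis
  proof (intro exI conjI allI)
    show "col g < card D * card D + 1" for g using col(1) by (simp add: less_Suc_eq_le)
    show "separated D {g. col g = k}" for k using col(2) unfolding separated_def R_def by blast
  qed
qed

lemma G_flow_act_in_topspace: "G_flow X act \<Longrightarrow> x \<in> topspace X \<Longrightarrow> act g x \<in> topspace X"
  unfolding G_flow_def continuous_map_def by blast

lemma G_flow_act_add: "G_flow X act \<Longrightarrow> x \<in> topspace X \<Longrightarrow> act (g + h) x = act g (act h x)"
  unfolding G_flow_def by blast

lemma G_flow_act_zero: "G_flow X act \<Longrightarrow> x \<in> topspace X \<Longrightarrow> act 0 x = x"
  unfolding G_flow_def by blast

lemma G_flow_act_minus_cancel: "G_flow X act \<Longrightarrow> x \<in> topspace X \<Longrightarrow> act (- g) (act g x) = x"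
  using G_flow_act_add[of X act x "- g" g] G_flow_act_zero[of X act x] by simp

lemma G_flow_openin_preimage:
  "G_flow X act \<Longrightarrow> openin X W \<Longrightarrow> openin X {x \<in> topspace X. act g x \<in> W}"
  unfolding G_flow_def by (blast intro: openin_continuous_map_preimage)

lemma compact_space_cluster_point:
  assumes "compact_space X" "\<B> \<noteq> {}"
    and sub: "\<And>B. B \<in> \<B> \<Longrightarrow> B \<noteq> {} \<and> B \<subseteq> topspace X"
    and directed: "\<And>B1 B2. B1 \<in> \<B> \<Longrightarrow> B2 \<in> \<B> \<Longrightarrow> \<exists>B\<in>\<B>. B \<subseteq> B1 \<inter> B2"
  shows "\<exists>w\<in>topspace X. \<forall>B\<in>\<B>. w \<in> X closure_of B"
proof -
  have below: "\<exists>B\<in>\<B>. B \<subseteq> \<Inter>\<F>" if "finite \<F>" "\<F> \<noteq> {}" "\<F> \<subseteq> \<B>" for \<F>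
    using that
  proof (induction \<F> rule: finite_ne_induct)
    case (insert B1 \<F>)
    then obtain B2 where "B2 \<in> \<B>" "B2 \<subseteq> \<Inter>\<F>" by auto
    moreover have "B1 \<in> \<B>" using insert.prems by simp
    ultimately obtain B where "B \<in> \<B>" "B \<subseteq> B1 \<inter> B2" using directed by blast
    with \<open>B2 \<subseteq> \<Inter>\<F>\<close> show ?case by blast
  qed auto
  have "\<Inter>\<F> \<noteq> {}" if \<F>: "finite \<F>" "\<F> \<subseteq> (\<lambda>B. X closure_of B) ` \<B>" for \<F>
  proof (cases "\<F> = {}")
    case False
    obtain \<F>' where \<F>': "finite \<F>'" "\<F>' \<subseteq> \<B>" "\<F> = (\<lambda>B. X closure_of B) ` \<F>'"
      using finite_subset_image[OF \<F>] by blast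
    with False obtain B where B: "B \<in> \<B>" "B \<subseteq> \<Inter>\<F>'" using below by blast
    have "C \<subseteq> X closure_of C" if "C \<in> \<F>'" for C
      by (rule closure_of_subset) (use sub that \<F>'(2) in blast)
    then have "\<Inter>\<F>' \<subseteq> \<Inter>\<F>" by (auto simp: \<F>'(3))
    with B sub[OF \<open>B \<in> \<B>\<close>] show ?thesis by blast
  qed simp
  then have "\<Inter>((\<lambda>B. X closure_of B) ` \<B>) \<noteq> {}"
    using \<open>compact_space X\<close>[unfolded compact_space_fip, rule_format, of "(\<lambda>B. X closure_of B) ` \<B>"]
    by auto
  then obtain w where "\<forall>B\<in>\<B>. w \<in> X closure_of B" by blast
  moreover from this \<open>\<B> \<noteq> {}\<close> have "w \<in> topspace X" using in_closure_of by fast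
  ultimately show ?thesis by blast
qed

text \<open>Neighbourhood form of: some net (g_i) moves every point of P to z.\<close>
definition proximal_at :: "'x topology \<Rightarrow> ('g \<Rightarrow> 'x \<Rightarrow> 'x) \<Rightarrow> 'x set \<Rightarrow> 'x \<Rightarrow> bool" where
  "proximal_at X act P z \<longleftrightarrow> z \<in> topspace X \<and> (\<forall>W. openin X W \<and> z \<in> W \<longrightarrow> (\<exists>g. act g ` P \<subseteq> W))"

lemma proximal_at_singleton: "G_flow X act \<Longrightarrow> x \<in> topspace X \<Longrightarrow> proximal_at X act {x} x"
  unfolding proximal_at_def by (auto intro!: exI[of _ 0] simp: G_flow_act_zero)

lemma proximal_at_cluster_point:
  assumes fl: "G_flow X act" and z: "proximal_at X act P z" and x: "x \<in> topspace X"
  shows "\<exists>w\<in>topspace X. \<forall>V W. openin X V \<and> w \<in> V \<and> openin X W \<and> z \<in> W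
           \<longrightarrow> (\<exists>g. act g x \<in> V \<and> act g ` P \<subseteq> W)"
proof -
  define B where "B W = {act g x | g. act g ` P \<subseteq> W}" for W
  have ztop: "z \<in> topspace X" and zW: "\<And>W. openin X W \<Longrightarrow> z \<in> W \<Longrightarrow> B W \<noteq> {}"
    using z unfolding proximal_at_def B_def by blast+
  have Btop: "B W \<subseteq> topspace X" for W
    using G_flow_act_in_topspace[OF fl x] unfolding B_def by blast
  have "\<exists>w\<in>topspace X. \<forall>C\<in>{B W | W. openin X W \<and> z \<in> W}. w \<in> X closure_of C"
  proof (rule compact_space_cluster_point)
    show "compact_space X" using fl unfolding G_flow_def by blast
    show "{B W | W. openin X W \<and> z \<in> W} \<noteq> {}" using ztop openin_topspace by blast
    show "C \<noteq> {} \<and> C \<subseteq> topspace X" if "C \<in> {B W | W. openin X W \<and> z \<in> W}" for C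
      using that zW Btop by blast
    show "\<exists>C\<in>{B W | W. openin X W \<and> z \<in> W}. C \<subseteq> C1 \<inter> C2"
      if C12: "C1 \<in> {B W | W. openin X W \<and> z \<in> W}" "C2 \<in> {B W | W. openin X W \<and> z \<in> W}" for C1 C2
    proof -
      obtain W1 W2 where "C1 = B W1" "C2 = B W2" "openin X W1" "openin X W2" "z \<in> W1" "z \<in> W2"
        using C12 by blast
      moreover have "B (W1 \<inter> W2) \<subseteq> B W1 \<inter> B W2" unfolding B_def by blast
      ultimately show ?thesis by blast
    qed
  qed
  then obtain w where "w \<in> topspace X"
    and w: "\<And>W. openin X W \<Longrightarrow> z \<in> W \<Longrightarrow> w \<in> X closure_of B W"
    by blast
  moreover have "\<exists>g. act g x \<in> V \<and> act g ` P \<subseteq> W"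
    if VW: "openin X V" "w \<in> V" "openin X W" "z \<in> W" for V W
  proof -
    obtain y where "y \<in> B W" "y \<in> V"
      using w[OF VW(3,4)] VW(1,2) unfolding in_closure_of by blast
    then show ?thesis unfolding B_def by blast
  qed
  ultimately show ?thesis by blast
qed

lemma proximal_at_insert:
  assumes fl: "G_flow X act" and pr: "proximal_flow X act"
    and z: "proximal_at X act P z" and P: "P \<subseteq> topspace X" and x: "x \<in> topspace X"
  shows "\<exists>z'. proximal_at X act (insert x P) z'"
proof -
  obtain w where wtop: "w \<in> topspace X" and w: "\<forall>V W. openin X V \<and> w \<in> V \<and> openin X W \<and> z \<in> W
      \<longrightarrow> (\<exists>g. act g x \<in> V \<and> act g ` P \<subseteq> W)"
    using proximal_at_cluster_point[OF fl z x] by blast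
  have ztop: "z \<in> topspace X" using z unfolding proximal_at_def by blast
  obtain z' F where z': "z' \<in> topspace X" "F \<noteq> bot"
    "limitin X (\<lambda>g. act g w) z' F" "limitin X (\<lambda>g. act g z) z' F"
    using pr wtop ztop unfolding proximal_flow_def by blast
  have "\<exists>g. act g ` insert x P \<subseteq> W" if W: "openin X W" "z' \<in> W" for W
  proof -
    have "\<forall>\<^sub>F g in F. act g w \<in> W \<and> act g z \<in> W"
      using z'(3,4) W unfolding limitin_def by (auto intro: eventually_conj)
    then obtain h where h: "act h w \<in> W" "act h z \<in> W"
      using z'(2) eventually_happens by blast
    define V where "V = {y \<in> topspace X. act h y \<in> W}"
    have "openin X V" "w \<in> V" "z \<in> V"
      using G_flow_openin_preimage[OF fl W(1)] h wtop ztop unfolding V_def by auto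
    then obtain g where g: "act g ` insert x P \<subseteq> V" using w[rule_format, of V V] by auto
    have "act (h + g) p \<in> W" if "p \<in> insert x P" for p
    proof -
      have "p \<in> topspace X" "act g p \<in> V" using that x P g by auto
      then show ?thesis by (simp add: G_flow_act_add[OF fl] V_def)
    qed
    then show ?thesis by blast
  qed
  with z'(1) show ?thesis unfolding proximal_at_def by blast
qed

lemma proximal_flow_finite_proximal_at:
  assumes fl: "G_flow X act" and pr: "proximal_flow X act"
    and "finite P" "P \<noteq> {}" "P \<subseteq> topspace X"
  shows "\<exists>z. proximal_at X act P z"
  using assms(3-5)
proof (induction P rule: finite_ne_induct)
  case (singleton x)
  then show ?case using proximal_at_singleton[OF fl] by blast
next
  case (insert x P)
  then obtain z where "proximal_at X act P z" by blast
  with insert.prems show ?case using proximal_at_insert[OF fl pr] by blast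
qed

lemma minimal_proximal_flow_translate_into:
  assumes fl: "G_flow X act" and mi: "minimal_flow X act" and pr: "proximal_flow X act"
    and P: "finite P" "P \<subseteq> topspace X" and U: "openin X U" "U \<noteq> {}"
  shows "\<exists>g. act g ` P \<subseteq> U"
proof (cases "P = {}")
  case False
  then obtain z where z: "proximal_at X act P z"
    using proximal_flow_finite_proximal_at[OF fl pr P(1) _ P(2)] by blast
  then have ztop: "z \<in> topspace X" unfolding proximal_at_def by blast
  obtain u where "u \<in> U" using U(2) by blast
  then have "u \<in> X closure_of range (\<lambda>g. act g z)"
    using mi ztop openin_subset[OF U(1)] unfolding minimal_flow_def by blast
  then obtain h where h: "act h z \<in> U"
    using U(1) \<open>u \<in> U\<close> unfolding in_closure_of by blast
  define V where "V = {y \<in> topspace X. act h y \<in> U}"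
  have "openin X V" "z \<in> V"
    using G_flow_openin_preimage[OF fl U(1)] h ztop unfolding V_def by auto
  then obtain g where g: "act g ` P \<subseteq> V" using z unfolding proximal_at_def by blast
  have "act (h + g) ` P \<subseteq> U"
    using g P(2) G_flow_act_add[OF fl] unfolding V_def by fastforce
  then show ?thesis by blast
qed simp

lemma separated_covering_if_minimal_proximal:
  fixes act :: "'g::group_add \<Rightarrow> 'x \<Rightarrow> 'x"
  assumes "countable (UNIV :: 'g set)"
    and fl: "G_flow X act" and mi: "minimal_flow X act" and pr: "proximal_flow X act"
  shows "separated_covering X act"
  unfolding separated_covering_def
proof (intro allI impI)
  fix D :: "'g set" and U
  assume DU: "finite D \<and> openin X U \<and> U \<noteq> {}"
  then obtain col :: "'g \<Rightarrow> nat" and N where col: "\<And>g. col g < N" "\<And>k. separated D {g. col g = k}"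
    using separated_colouring[OF assms(1)] by blast
  have "\<exists>k. \<forall>x\<in>topspace X. \<exists>s. col s = k \<and> act s x \<in> U"
  proof (rule ccontr)
    assume "\<nexists>k. \<forall>x\<in>topspace X. \<exists>s. col s = k \<and> act s x \<in> U"
    then obtain y where y: "\<And>k. y k \<in> topspace X" "\<And>k s. col s = k \<Longrightarrow> act s (y k) \<notin> U"
      by metis
    obtain g where "act g ` y ` {..<N} \<subseteq> U"
      using minimal_proximal_flow_translate_into[OF fl mi pr, of "y ` {..<N}" U] y(1) DU by blast
    with col(1)[of g] y(2)[of g "col g"] show False by blast
  qed
  then obtain k where k: "\<forall>x\<in>topspace X. \<exists>s. col s = k \<and> act s x \<in> U" by blast
  have "(\<Union>s\<in>{g. col g = k}. act (- s) ` U) = topspace X"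
  proof
    show "(\<Union>s\<in>{g. col g = k}. act (- s) ` U) \<subseteq> topspace X"
      using G_flow_act_in_topspace[OF fl] openin_subset DU by blast
    show "topspace X \<subseteq> (\<Union>s\<in>{g. col g = k}. act (- s) ` U)"
    proof
      fix x assume x: "x \<in> topspace X"
      with k obtain s where "col s = k" "act s x \<in> U" by blast
      with G_flow_act_minus_cancel[OF fl x, of s] show "x \<in> (\<Union>s\<in>{g. col g = k}. act (- s) ` U)"
        by force
    qed
  qed
  with col(2) show "\<exists>S. separated D S \<and> (\<Union>s\<in>S. act (- s) ` U) = topspace X" by blast
qed

lemma topspace_bernoulli_space: "topspace (bernoulli_space A) = {x. \<forall>h. x h \<in> A}"
  unfolding bernoulli_space_def by (auto simp: PiE_iff)

lemma openin_bernoulli_space_contains_cylinder: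
  assumes "openin (bernoulli_space A) U" "x \<in> U"
  shows "\<exists>D. finite D \<and> (\<forall>z\<in>topspace (bernoulli_space A). (\<forall>h\<in>D. z h = x h) \<longrightarrow> z \<in> U)"
proof -
  obtain V where V: "x \<in> (\<Pi>\<^sub>E h\<in>UNIV. V h)" "\<And>h. openin (discrete_topology A) (V h)"
    "finite {h. V h \<noteq> A}" "(\<Pi>\<^sub>E h\<in>UNIV. V h) \<subseteq> U"
    using product_topology_open_contains_basis[OF assms[unfolded bernoulli_space_def]] by auto
  have "z \<in> U" if "z \<in> topspace (bernoulli_space A)" "\<forall>h\<in>{h. V h \<noteq> A}. z h = x h" for z
  proof -
    have "z h \<in> V h" for h
      using that V(1) unfolding topspace_bernoulli_space by (cases "V h = A") auto
    then show ?thesis using V(4) by auto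
  qed
  with V(3) show ?thesis by blast
qed

lemma separated_shifts_agree:
  fixes x :: "'g::group_add \<Rightarrow> 'a"
  assumes S: "separated D S" and x: "x \<in> topspace (bernoulli_space A)"
  shows "\<exists>y\<in>topspace (bernoulli_space A). \<forall>s\<in>S. \<forall>h\<in>D. bernoulli_shift s y h = x h"
proof -
  define y where "y g = (if \<exists>s\<in>S. g - s \<in> D then x (g - (SOME s. s \<in> S \<and> g - s \<in> D)) else x g)"
    for g
  have "y (h + s) = x h" if "s \<in> S" "h \<in> D" for s h
  proof -
    define s' where "s' = (SOME s'. s' \<in> S \<and> h + s - s' \<in> D)"
    have "\<exists>s'. s' \<in> S \<and> h + s - s' \<in> D" using that by auto
    then have "s' \<in> S \<and> h + s - s' \<in> D" unfolding s'_def by (rule someI_ex)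
    then have s': "s' \<in> S" "h + s - s' \<in> D" by blast+
    have "h + s \<in> (\<lambda>d. d + s') ` D \<inter> (\<lambda>d. d + s) ` D"
      using s'(2) \<open>h \<in> D\<close> by (metis IntI diff_add_cancel image_eqI)
    then have "s' = s" using S s'(1) \<open>s \<in> S\<close> unfolding separated_def by blast
    moreover have "\<exists>t\<in>S. h + s - t \<in> D" using that by (intro bexI[of _ s]) simp_all
    ultimately show ?thesis unfolding y_def s'_def[symmetric] by simp
  qed
  moreover have "y \<in> topspace (bernoulli_space A)"
    using x unfolding topspace_bernoulli_space y_def by auto
  ultimately show ?thesis unfolding bernoulli_shift_def by blast
qed

lemma invariant_set_meets_open_box:
  fixes actY :: "'g::group_add \<Rightarrow> 'y \<Rightarrow> 'y" and A :: "'a set"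
    and Z :: "(('g \<Rightarrow> 'a) \<times> 'y) set"
  assumes fl: "G_flow Y actY" and sc: "separated_covering Y actY"
    and inv: "\<And>g x y. (x, y) \<in> Z \<Longrightarrow> (bernoulli_shift g x, actY g y) \<in> Z"
    and Z: "Z \<subseteq> topspace (bernoulli_space A) \<times> topspace Y" "topspace (bernoulli_space A) \<subseteq> fst ` Z"
    and U: "openin (bernoulli_space A) U" "U \<noteq> {}" and V: "openin Y V" "V \<noteq> {}"
  shows "Z \<inter> U \<times> V \<noteq> {}"
proof -
  let ?X = "bernoulli_space A :: ('g \<Rightarrow> 'a) topology"
  obtain x0 where "x0 \<in> U" using U(2) by blast
  obtain D where "finite D" and D: "\<And>z. z \<in> topspace ?X \<Longrightarrow> \<forall>h\<in>D. z h = x0 h \<Longrightarrow> z \<in> U"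
    using openin_bernoulli_space_contains_cylinder[OF U(1) \<open>x0 \<in> U\<close>] by blast
  obtain S where S: "separated D S" "(\<Union>s\<in>S. actY (- s) ` V) = topspace Y"
    using sc[unfolded separated_covering_def, rule_format, of D V] \<open>finite D\<close> V by blast
  have "x0 \<in> topspace ?X" using U(1) \<open>x0 \<in> U\<close> openin_subset by blast
  then obtain x where x: "x \<in> topspace ?X" "\<forall>s\<in>S. \<forall>h\<in>D. bernoulli_shift s x h = x0 h"
    using separated_shifts_agree[OF S(1)] by blast
  then have "x \<in> fst ` Z" using Z(2) by blast
  then obtain y where xy: "(x, y) \<in> Z" by force
  then have "y \<in> (\<Union>s\<in>S. actY (- s) ` V)" using S(2) Z(1) by auto
  then obtain s w where "s \<in> S" "w \<in> V" and y: "y = actY (- s) w" by blast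
  have "actY s y = w"
    using G_flow_act_minus_cancel[OF fl, of w "- s"] \<open>w \<in> V\<close> openin_subset[OF V(1)] y by auto
  then have "(bernoulli_shift s x, w) \<in> Z" using inv[OF xy, of s] by simp
  moreover have "bernoulli_shift s x \<in> topspace ?X"
    using x(1) by (simp add: topspace_bernoulli_space bernoulli_shift_def)
  then have "bernoulli_shift s x \<in> U" using D x(2) \<open>s \<in> S\<close> by blast
  ultimately show ?thesis using \<open>w \<in> V\<close> by blast
qed

lemma disjoint_bernoulli_if_separated_covering:
  fixes actY :: "'g::group_add \<Rightarrow> 'y \<Rightarrow> 'y" and A :: "'a set"
  assumes fl: "G_flow Y actY" and sc: "separated_covering Y actY"
  shows "disjoint_flows (bernoulli_space A) (bernoulli_shift :: 'g \<Rightarrow> ('g \<Rightarrow> 'a) \<Rightarrow> ('g \<Rightarrow> 'a)) Y actY"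
  unfolding disjoint_flows_def
proof (intro allI impI)
  fix Z :: "(('g \<Rightarrow> 'a) \<times> 'y) set"
  let ?X = "bernoulli_space A :: ('g \<Rightarrow> 'a) topology"
  assume "closedin (prod_topology ?X Y) Z \<and> (\<forall>g. \<forall>(x, y)\<in>Z. (bernoulli_shift g x, actY g y) \<in> Z) \<and>
    fst ` Z = topspace ?X \<and> snd ` Z = topspace Y"
  then have closed: "closedin (prod_topology ?X Y) Z"
    and inv: "\<And>g x y. (x, y) \<in> Z \<Longrightarrow> (bernoulli_shift g x, actY g y) \<in> Z"
    and fst: "topspace ?X \<subseteq> fst ` Z"
    by auto
  have Zsub: "Z \<subseteq> topspace ?X \<times> topspace Y" using closedin_subset[OF closed] by simp
  have "(x0, y0) \<in> prod_topology ?X Y closure_of Z"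
    if "x0 \<in> topspace ?X" "y0 \<in> topspace Y" for x0 y0
    unfolding in_closure_of
  proof (intro conjI allI impI)
    show "(x0, y0) \<in> topspace (prod_topology ?X Y)" using that by simp
    fix T assume "(x0, y0) \<in> T \<and> openin (prod_topology ?X Y) T"
    then obtain U V where UV: "openin ?X U" "openin Y V" "x0 \<in> U" "y0 \<in> V" "U \<times> V \<subseteq> T"
      unfolding openin_prod_topology_alt by blast
    then have "Z \<inter> U \<times> V \<noteq> {}"
      using invariant_set_meets_open_box[OF fl sc inv Zsub fst] by blast
    with UV(5) show "\<exists>q. q \<in> Z \<and> q \<in> T" by blast
  qed
  then show "Z = topspace ?X \<times> topspace Y"
    using closure_of_closedin[OF closed] Zsub by force
qed

theorem corollary4p5:
  fixes A :: "'a set" and X :: "'x topology" and act :: "'g::group_add \<Rightarrow> 'x \<Rightarrow> 'x"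
  assumes "countable (UNIV :: 'g set)" and "infinite (UNIV :: 'g set)"
    and "finite A"
  shows "(\<forall>(Y :: 'x topology) actY. G_flow Y actY \<and> minimal_flow Y actY \<and> proximal_flow Y actY
            \<longrightarrow> disjoint_flows (bernoulli_space A) (bernoulli_shift :: 'g \<Rightarrow> ('g \<Rightarrow> 'a) \<Rightarrow> ('g \<Rightarrow> 'a)) Y actY)
       \<and> (G_flow X act \<and> minimal_flow X act \<and> proximal_flow X act \<longrightarrow> separated_covering X act)"
  using disjoint_bernoulli_if_separated_covering separated_covering_if_minimal_proximal[OF assms(1)]
  by blast

end
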